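(* Let $k,r\geq 1$, let $1\leq m\leq k$, let $1\le d\le r$, and let $I_d\subseteq\{1,\dots,r\}$ with $|I_d|=d$. Then for every $n\geq k$, $$\bigl|S_n^{(r)}\bigl(T_{k,r}^m(I_d)\bigr)\bigr|=(k-1)!\,r^{k-1}\prod_{j=k}^n\bigl((r-d)j+(k-1)d\bigr).$$
   Context: For $n,r\ge1$, $S_n^{(r)}$ denotes the set of coloured permutations of length $n$ with $r$ colours: sequences $\phi=(\phi_1,\dots,\phi_n)$ where $\phi_i=a_i^{(c_i)}$, $(a_1,\dots,a_n)$ is a permutation of $\{1,\dots,n\}$ and each $c_i\in\{1,\dots,r\}$ is the colour of $a_i$; so $|S_n^{(r)}|=n!\,r^n$. Write $|\phi|=(a_1,\dots,a_n)$. For $\phi=(\tau_1^{(s_1)},\dots,\tau_k^{(s_k)})\in S_k^{(r)}$ and $\psi=(\alpha_1^{(v_1)},\dots,\alpha_n^{(v_n)})\in S_n^{(r)}$, an occurrence of $\phi$ in $\psi$ is a sequence of indices $1\le i_1<\dots<i_k\le n$ such that $(\alpha_{i_1},\dots,\alpha_{i_k})$ is order-isomorphic to $(\tau_1,\dots,\tau_k)$ and $v_{i_j}=s_j$ for all $j=1,\dots,k$. $\psi$ contains $\phi$ if there is at least one occurrence, and avoids $\phi$ otherwise. For a set $T$ of coloured patterns, $S_n^{(r)}(T)$ is the set of $\psi\in S_n^{(r)}$ avoiding every $\phi\in T$. For $I_d\subseteq\{1,\dots,r\}$ with $|I_d|=d$ and $1\le m\le k$, $T_{k,r}^m(I_d)$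 is the set of all $\phi\in S_k^{(r)}$ whose first entry is $\phi_1=m^{(c)}$ for some colour $c\in I_d$. *)

theory Defs
  imports Main
begin

definition coloured_perms :: "nat \<Rightarrow> nat \<Rightarrow> (nat \<times> nat) list set" where
  "coloured_perms n r = {phi. length phi = n \<and> set (map fst phi) = {1..n}
      \<and> distinct (map fst phi) \<and> (\<forall>p \<in> set phi. snd p \<in> {1..r})}"

definition order_iso :: "nat list \<Rightarrow> nat list \<Rightarrow> bool" where
  "order_iso xs ys \<longleftrightarrow> length xs = length ys \<and>
     (\<forall>i < length xs. \<forall>j < length xs. (xs ! i < xs ! j \<longleftrightarrow> ys ! i < ys ! j))"

text \<open>An occurrence of phi (length k) in psi: strictly increasing indices
  i_1 < ... < i_k (0-based, below length psi) with order-isomorphic letters and equal colours.\<close>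
definition occurrence :: "(nat \<times> nat) list \<Rightarrow> (nat \<times> nat) list \<Rightarrow> nat list \<Rightarrow> bool" where
  "occurrence phi psi idx \<longleftrightarrow> length idx = length phi \<and> sorted_wrt (<) idx
     \<and> (\<forall>i \<in> set idx. i < length psi)
     \<and> order_iso (map (\<lambda>i. fst (psi ! i)) idx) (map fst phi)
     \<and> (\<forall>j < length phi. snd (psi ! (idx ! j)) = snd (phi ! j))"

definition contains :: "(nat \<times> nat) list \<Rightarrow> (nat \<times> nat) list \<Rightarrow> bool" where
  "contains psi phi \<longleftrightarrow> (\<exists>idx. occurrence phi psi idx)"

definition avoiding :: "nat \<Rightarrow> nat \<Rightarrow> (nat \<times> nat) list set \<Rightarrow> (nat \<times> nat) list set" where
  "avoiding n r T = {psi \<in> coloured_perms n r. \<forall>phi \<in> T. \<not> contains psi phi}"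

definition T_set :: "nat \<Rightarrow> nat \<Rightarrow> nat \<Rightarrow> nat set \<Rightarrow> (nat \<times> nat) list set" where
  "T_set k r m I = {phi \<in> coloured_perms k r. k \<ge> 1 \<and> fst (hd phi) = m \<and> snd (hd phi) \<in> I}"

end

theory Submission
  imports Defs
begin

text \<open>Reading a coloured permutation from the left, its first entry \<open>x\<close> of colour \<open>c\<close> starts
  an occurrence of some pattern of \<open>T^m_{k,r}(I)\<close> exactly when \<open>c \<in> I\<close> and at least
  \<open>m - 1\<close> smaller and \<open>k - m\<close> larger entries follow it: the pattern is then the
  standardization of \<open>x\<close> together with such entries. So an avoider is an admissible first
  entry followed by an avoider of the remaining values. Among \<open>L\<close> values, all \<open>(r - d) L\<close>
  entries with a colour outside \<open>I\<close> are admissible, and with a colour in \<open>I\<close> exactly the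
  \<open>min L (k - 1)\<close> values lacking room are; multiplying over \<open>L = 1..n\<close> gives the formula.\<close>

definition rank :: "nat set \<Rightarrow> nat \<Rightarrow> nat" where
  "rank W v = card {w \<in> W. w < v}"

lemma rank_mono: "finite W \<Longrightarrow> u \<le> v \<Longrightarrow> rank W u \<le> rank W v"
  unfolding rank_def by (rule card_mono) auto

lemma rank_less_rank_iff:
  assumes "finite W" "u \<in> W"
  shows "rank W u < rank W v \<longleftrightarrow> u < v"
proof
  show "u < v \<Longrightarrow> rank W u < rank W v"
    unfolding rank_def using assms by (intro psubset_card_mono) auto
  show "rank W u < rank W v \<Longrightarrow> u < v"
    using rank_mono[OF assms(1), of v u] by linarith
qed

lemma inj_on_rank: "finite W \<Longrightarrow> inj_on (rank W) W"
  by (rule inj_onI) (metis linorder_neqE_nat less_irrefl rank_less_rank_iff)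

lemma rank_image:
  assumes "finite W"
  shows "rank W ` W = {..<card W}"
proof -
  have "rank W ` W \<subseteq> {..<card W}"
    unfolding rank_def using assms by (auto intro!: psubset_card_mono)
  moreover have "card (rank W ` W) = card W"
    by (rule card_image[OF inj_on_rank[OF assms]])
  ultimately show ?thesis
    by (simp add: card_subset_eq)
qed

definition standardize :: "(nat \<times> nat) list \<Rightarrow> (nat \<times> nat) list" where
  "standardize xs = map (apfst (Suc \<circ> rank (fst ` set xs))) xs"

lemma order_iso_standardize: "order_iso (map fst xs) (map fst (standardize xs))"
  unfolding order_iso_def standardize_def by (simp add: rank_less_rank_iff)

lemma standardize_in_coloured_perms:
  assumes "distinct (map fst xs)" "\<forall>p \<in> set xs. snd p \<in> {1..r}"
  shows "standardize xs \<in> coloured_perms (length xs) r"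
proof -
  let ?W = "fst ` set xs"
  have letters: "map fst (standardize xs) = map (Suc \<circ> rank ?W) (map fst xs)"
    by (simp add: standardize_def)
  have "card ?W = length xs"
    using distinct_card[OF assms(1)] by simp
  have "set (map fst (standardize xs)) = Suc ` rank ?W ` ?W"
    unfolding letters by (simp add: image_image)
  also have "\<dots> = {1..length xs}"
    using \<open>card ?W = length xs\<close>
    by (simp add: rank_image lessThan_atLeast0 atLeastLessThanSuc_atLeastAtMost)
  finally have "set (map fst (standardize xs)) = {1..length xs}" .
  moreover have "distinct (map fst (standardize xs))"
    unfolding letters using assms(1) inj_on_rank[of ?W]
    by (simp add: distinct_map inj_on_def)
  moreover have "\<forall>p \<in> set (standardize xs). snd p \<in> {1..r}"
    using assms(2) by (auto simp: standardize_def)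
  moreover have "length (standardize xs) = length xs"
    by (simp add: standardize_def)
  ultimately show ?thesis
    by (simp add: coloured_perms_def)
qed

lemma occurrence_standardize:
  assumes "sorted_wrt (<) idx" "\<forall>i \<in> set idx. i < length psi"
  shows "occurrence (standardize (map ((!) psi) idx)) psi idx"
  using assms order_iso_standardize[of "map ((!) psi) idx"]
  by (simp add: occurrence_def standardize_def o_def)

lemma occurrence_Cons:
  "occurrence phi rest idx \<Longrightarrow> occurrence phi (p # rest) (map Suc idx)"
  unfolding occurrence_def by (auto simp: sorted_wrt_map o_def)

lemma occurrence_ConsD:
  assumes occ: "occurrence phi (p # rest) idx" and "0 \<notin> set idx"
  shows "occurrence phi rest (map (\<lambda>i. i - 1) idx)"
proof -
  have nonzero: "\<forall>i \<in> set idx. i \<noteq> 0"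
    using \<open>0 \<notin> set idx\<close> by metis
  have shift: "(p # rest) ! i = rest ! (i - 1)" if "i \<in> set idx" for i
    using nonzero that by (cases i) auto
  have "sorted_wrt (<) (map (\<lambda>i. i - 1) idx)"
    using occ nonzero unfolding occurrence_def sorted_wrt_map
    by (auto elim!: sorted_wrt_mono_rel[rotated])
  moreover have "order_iso (map (\<lambda>i. fst (rest ! i)) (map (\<lambda>i. i - 1) idx)) (map fst phi)"
  proof -
    have "map (\<lambda>i. fst ((p # rest) ! i)) idx = map (\<lambda>i. fst (rest ! i)) (map (\<lambda>i. i - 1) idx)"
      using shift by simp
    with occ show ?thesis
      unfolding occurrence_def by metis
  qed
  moreover have "\<forall>i \<in> set idx. i - 1 < length rest"
    using occ nonzero unfolding occurrence_def by fastforce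
  moreover have "snd (rest ! (idx ! j - 1)) = snd (phi ! j)" if "j < length phi" for j
    using occ that shift[of "idx ! j"] unfolding occurrence_def by (metis nth_mem)
  ultimately show ?thesis
    using occ unfolding occurrence_def by simp
qed

lemma contains_Cons_iff:
  "contains (p # rest) phi \<longleftrightarrow> contains rest phi \<or> (\<exists>idx. occurrence phi (p # rest) (0 # idx))"
proof
  assume "contains (p # rest) phi"
  then obtain idx where occ: "occurrence phi (p # rest) idx"
    unfolding contains_def by blast
  show "contains rest phi \<or> (\<exists>idx. occurrence phi (p # rest) (0 # idx))"
  proof (cases "0 \<in> set idx")
    case True
    with occ have "idx = 0 # tl idx"
      unfolding occurrence_def by (cases idx) auto
    with occ show ?thesis by metis
  next
    case False
    with occ show ?thesis
      unfolding contains_def by (blast dest: occurrence_ConsD)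
  qed
next
  show "contains rest phi \<or> (\<exists>idx. occurrence phi (p # rest) (0 # idx)) \<Longrightarrow> contains (p # rest) phi"
    unfolding contains_def by (blast dest: occurrence_Cons)
qed

lemma contains_Nil_iff: "contains [] phi \<longleftrightarrow> phi = []"
  unfolding contains_def occurrence_def order_iso_def by (cases phi) auto

definition has_room :: "nat \<Rightarrow> nat \<Rightarrow> nat set \<Rightarrow> nat \<Rightarrow> bool" where
  "has_room k m S x \<longleftrightarrow> m - 1 \<le> card {y \<in> S. y < x} \<and> k - m \<le> card {y \<in> S. x < y}"

lemma card_nth_positions:
  assumes "distinct xs"
  shows "card {j. j < length xs \<and> P (xs ! j)} = card {a \<in> set xs. P a}"
proof -
  have "(!) xs ` {j. j < length xs \<and> P (xs ! j)} = {a \<in> set xs. P a}"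
    by (auto simp: in_set_conv_nth)
  moreover have "inj_on ((!) xs) {j. j < length xs \<and> P (xs ! j)}"
    using assms by (intro inj_on_nth) auto
  ultimately show ?thesis
    by (metis card_image)
qed

lemma occurrence_at_head_embedding:
  assumes occ: "occurrence phi ((x, c) # rest) (0 # idx)" and dist: "distinct (map fst phi)"
  obtains h where "h 0 = x" "inj_on h {..<length phi}"
    and "\<And>j. 0 < j \<Longrightarrow> j < length phi \<Longrightarrow> h j \<in> fst ` set rest"
    and "\<And>i j. i < length phi \<Longrightarrow> j < length phi \<Longrightarrow> h i < h j \<longleftrightarrow> fst (phi ! i) < fst (phi ! j)"
proof -
  let ?psi = "(x, c) # rest" and ?pos = "0 # idx"
  define h where "h j = fst (?psi ! (?pos ! j))" for j
  have len: "length ?pos = length phi"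
    using occ unfolding occurrence_def by simp
  have iso: "h i < h j \<longleftrightarrow> fst (phi ! i) < fst (phi ! j)" if "i < length phi" "j < length phi" for i j
    using occ that unfolding occurrence_def order_iso_def h_def by (simp del: list.map)
  have "inj_on h {..<length phi}"
  proof (rule inj_onI)
    fix i j assume ij: "i \<in> {..<length phi}" "j \<in> {..<length phi}" and "h i = h j"
    then have "fst (phi ! i) = fst (phi ! j)"
      using iso[of i j] iso[of j i] by auto
    then show "i = j"
      using dist ij nth_eq_iff_index_eq[of "map fst phi" i j] by simp
  qed
  moreover have "h j \<in> fst ` set rest" if "0 < j" "j < length phi" for j
  proof -
    have "idx ! (j - 1) \<in> set idx"
      using that len by simp
    moreover have "\<forall>i \<in> set idx. 0 < i \<and> i < length ?psi"
      using occ unfolding occurrence_def by simp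
    ultimately show ?thesis
      using that by (auto simp: h_def nth_Cons')
  qed
  moreover have "h 0 = x"
    by (simp add: h_def)
  ultimately show ?thesis
    using that iso by blast
qed

lemma occurrence_at_head_has_room:
  assumes occ: "occurrence phi ((x, c) # rest) (0 # idx)"
    and perm: "distinct (map fst phi)" "set (map fst phi) = {1..k}"
  shows "has_room k (fst (hd phi)) (fst ` set rest) x"
proof -
  define m where "m = fst (hd phi)"
  have len: "length phi = k"
    using distinct_card[OF perm(1)] perm(2) by simp
  moreover have "length phi = length (0 # idx)"
    using occ unfolding occurrence_def by simp
  ultimately have phi0: "fst (phi ! 0) = m" and "0 < k"
    by (cases phi; simp add: m_def)+
  obtain h where "h 0 = x" and "inj_on h {..<k}"
    and in_rest: "\<And>j. 0 < j \<Longrightarrow> j < k \<Longrightarrow> h j \<in> fst ` set rest"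
    and iso: "\<And>i j. i < k \<Longrightarrow> j < k \<Longrightarrow> h i < h j \<longleftrightarrow> fst (phi ! i) < fst (phi ! j)"
    using occurrence_at_head_embedding[OF occ perm(1)] unfolding len by blast
  have room: "card {a \<in> {1..k}. P a} \<le> card {y \<in> fst ` set rest. P' y}"
    if "\<not> P m" and "\<And>i. i < k \<Longrightarrow> P (fst (phi ! i)) \<Longrightarrow> P' (h i)" for P P'
  proof -
    have "card {a \<in> {1..k}. P a} = card {j. j < length (map fst phi) \<and> P (map fst phi ! j)}"
      using card_nth_positions[OF perm(1), of P] unfolding perm(2) by (rule sym)
    also have "\<dots> = card {j. j < k \<and> P (fst (phi ! j))}"
      using len by (intro arg_cong[where f = card]) auto
    also have "\<dots> = card (h ` {j. j < k \<and> P (fst (phi ! j))})"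
      by (rule card_image[symmetric], rule inj_on_subset[OF \<open>inj_on h {..<k}\<close>]) auto
    also have "\<dots> \<le> card {y \<in> fst ` set rest. P' y}"
    proof (rule card_mono)
      show "h ` {j. j < k \<and> P (fst (phi ! j))} \<subseteq> {y \<in> fst ` set rest. P' y}"
      proof
        fix y assume "y \<in> h ` {j. j < k \<and> P (fst (phi ! j))}"
        then obtain j where "j < k" "P (fst (phi ! j))" "y = h j"
          by blast
        moreover from this have "0 < j"
          using that(1) phi0 by (metis gr0I)
        ultimately show "y \<in> {y \<in> fst ` set rest. P' y}"
          using in_rest that(2) by blast
      qed
    qed simp
    finally show ?thesis .
  qed
  have "m \<in> {1..k}"
    using phi0 perm(2) len \<open>0 < k\<close> by (metis length_map nth_map nth_mem)
  then have "{a \<in> {1..k}. a < m} = {1..<m}" "{a \<in> {1..k}. m < a} = {m<..k}"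
    by auto
  moreover have "h i < x \<longleftrightarrow> fst (phi ! i) < m" "x < h i \<longleftrightarrow> m < fst (phi ! i)" if "i < k" for i
    using iso[OF that \<open>0 < k\<close>] iso[OF \<open>0 < k\<close> that] phi0 \<open>h 0 = x\<close> by simp_all
  ultimately have "m - 1 \<le> card {y \<in> fst ` set rest. y < x}" "k - m \<le> card {y \<in> fst ` set rest. x < y}"
    using room[of "\<lambda>a. a < m" "\<lambda>y. y < x"] room[of "\<lambda>a. m < a" "\<lambda>y. x < y"] by simp_all
  then show ?thesis
    unfolding has_room_def m_def by (rule conjI)
qed

lemma map_nth_filter_upt:
  "map ((!) xs) (filter (\<lambda>i. P (xs ! i)) [0..<length xs]) = filter P xs"
  by (induction xs) (simp_all add: upt_conv_Cons map_Suc_upt[symmetric] filter_map o_def del: upt_Suc)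

lemma occurrence_standardize_filter:
  assumes "fst p \<in> W"
  shows "\<exists>idx. occurrence (standardize (filter (\<lambda>q. fst q \<in> W) (p # rest))) (p # rest) (0 # idx)"
proof -
  let ?psi = "p # rest"
  define pos where "pos = filter (\<lambda>i. fst (?psi ! i) \<in> W) [0..<length ?psi]"
  have "map ((!) ?psi) pos = filter (\<lambda>q. fst q \<in> W) ?psi"
    unfolding pos_def by (rule map_nth_filter_upt)
  moreover have "pos = 0 # tl pos"
    unfolding pos_def using assms by (simp add: upt_conv_Cons del: upt_Suc)
  moreover have "sorted_wrt (<) pos" "\<forall>i \<in> set pos. i < length ?psi"
    unfolding pos_def by (simp_all add: sorted_wrt_filter del: upt_Suc)
  ultimately show ?thesis
    by (metis occurrence_standardize)
qed

lemma has_room_occurrence_at_head: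
  assumes dist: "distinct (map fst ((x, c) # rest))"
    and col: "\<forall>p \<in> set ((x, c) # rest). snd p \<in> {1..r}"
    and room: "has_room k m (fst ` set rest) x" and "1 \<le> m" "m \<le> k"
  shows "\<exists>phi idx. phi \<in> coloured_perms k r \<and> hd phi = (m, c) \<and> occurrence phi ((x, c) # rest) (0 # idx)"
proof -
  let ?psi = "(x, c) # rest" and ?V = "fst ` set rest"
  obtain A where A: "A \<subseteq> {y \<in> ?V. y < x}" "card A = m - 1" "finite A"
    using room obtain_subset_with_card_n unfolding has_room_def by meson
  obtain B where B: "B \<subseteq> {y \<in> ?V. x < y}" "card B = k - m" "finite B"
    using room obtain_subset_with_card_n unfolding has_room_def by meson
  define W where "W = insert x (A \<union> B)"
  have "A \<inter> B = {}" "x \<notin> A \<union> B"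
    using A(1) B(1) by force+
  then have "card W = k"
    using A B \<open>1 \<le> m\<close> \<open>m \<le> k\<close> unfolding W_def by (simp add: card_Un_disjoint)
  have "{w \<in> W. w < x} = A"
    using A B unfolding W_def by auto
  define sub where "sub = filter (\<lambda>p. fst p \<in> W) ?psi"
  obtain idx where occ: "occurrence (standardize sub) ?psi (0 # idx)"
    using occurrence_standardize_filter[of "(x, c)" W rest] unfolding sub_def W_def by auto
  have letters: "fst ` set sub = W" and "distinct (map fst sub)"
    using A B dist unfolding sub_def W_def by (auto simp: distinct_map_filter)
  then have "length sub = k"
    using distinct_card \<open>card W = k\<close> by fastforce
  have "standardize sub \<in> coloured_perms k r"
    using standardize_in_coloured_perms[OF \<open>distinct (map fst sub)\<close>] col \<open>length sub = k\<close>
    unfolding sub_def by auto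
  moreover have "hd (standardize sub) = (m, c)"
    using \<open>{w \<in> W. w < x} = A\<close> A(2) \<open>1 \<le> m\<close> letters
    by (simp add: sub_def W_def standardize_def rank_def)
  ultimately show ?thesis
    using occ by blast
qed

lemma contains_T_set_Cons_iff:
  assumes "distinct (map fst ((x, c) # rest))" "\<forall>p \<in> set ((x, c) # rest). snd p \<in> {1..r}"
    and "1 \<le> m" "m \<le> k"
  shows "(\<exists>phi \<in> T_set k r m I. contains ((x, c) # rest) phi) \<longleftrightarrow>
    (\<exists>phi \<in> T_set k r m I. contains rest phi) \<or> (c \<in> I \<and> has_room k m (fst ` set rest) x)"
proof -
  have "(\<exists>phi \<in> T_set k r m I. \<exists>idx. occurrence phi ((x, c) # rest) (0 # idx)) \<longleftrightarrow>
      c \<in> I \<and> has_room k m (fst ` set rest) x"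
  proof
    assume "\<exists>phi \<in> T_set k r m I. \<exists>idx. occurrence phi ((x, c) # rest) (0 # idx)"
    then obtain phi idx where phi: "phi \<in> T_set k r m I" and occ: "occurrence phi ((x, c) # rest) (0 # idx)"
      by blast
    then have "phi \<noteq> []" and "snd (phi ! 0) = c"
      unfolding occurrence_def by (auto dest: spec[of _ 0])
    then have "c \<in> I"
      using phi unfolding T_set_def by (simp add: hd_conv_nth)
    moreover have "has_room k m (fst ` set rest) x"
      using occurrence_at_head_has_room[OF occ] phi unfolding T_set_def coloured_perms_def by auto
    ultimately show "c \<in> I \<and> has_room k m (fst ` set rest) x" ..
  next
    assume "c \<in> I \<and> has_room k m (fst ` set rest) x"
    then show "\<exists>phi \<in> T_set k r m I. \<exists>idx. occurrence phi ((x, c) # rest) (0 # idx)"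
      using has_room_occurrence_at_head[OF assms(1,2) _ assms(3,4)] assms(3,4)
      unfolding T_set_def by fastforce
  qed
  then show ?thesis
    unfolding contains_Cons_iff by blast
qed

definition coloured_arrangements :: "nat set \<Rightarrow> nat \<Rightarrow> (nat \<times> nat) list set" where
  "coloured_arrangements S r = {psi. distinct (map fst psi) \<and> set (map fst psi) = S
      \<and> (\<forall>p \<in> set psi. snd p \<in> {1..r})}"

lemma coloured_perms_eq: "coloured_perms n r = coloured_arrangements {1..n} r"
  unfolding coloured_perms_def coloured_arrangements_def by (auto dest: distinct_card)

lemma Cons_in_coloured_arrangements_iff:
  "(x, c) # rest \<in> coloured_arrangements S r \<longleftrightarrow>
    x \<in> S \<and> c \<in> {1..r} \<and> rest \<in> coloured_arrangements (S - {x}) r"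
  unfolding coloured_arrangements_def by auto

lemma finite_coloured_arrangements:
  assumes "finite S"
  shows "finite (coloured_arrangements S r)"
proof (rule finite_subset)
  show "coloured_arrangements S r \<subseteq> {xs. set xs \<subseteq> S \<times> {1..r} \<and> length xs = card S}"
    unfolding coloured_arrangements_def by (force dest: distinct_card)
  show "finite {xs. set xs \<subseteq> S \<times> {1..r} \<and> length xs = card S}"
    using assms by (intro finite_lists_length_eq) auto
qed

definition avoiders :: "nat set \<Rightarrow> nat \<Rightarrow> (nat \<times> nat) list set \<Rightarrow> (nat \<times> nat) list set" where
  "avoiders S r T = {psi \<in> coloured_arrangements S r. \<forall>phi \<in> T. \<not> contains psi phi}"

lemma avoiders_empty:
  assumes "\<forall>phi \<in> T. phi \<noteq> []"
  shows "avoiders {} r T = {[]}"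
  using assms unfolding avoiders_def coloured_arrangements_def by (auto simp: contains_Nil_iff)

definition admissible_heads :: "nat \<Rightarrow> nat \<Rightarrow> nat \<Rightarrow> nat set \<Rightarrow> nat set \<Rightarrow> (nat \<times> nat) set" where
  "admissible_heads k r m I S = {(x, c) \<in> S \<times> {1..r}. c \<in> I \<longrightarrow> \<not> has_room k m S x}"

lemma has_room_Diff_self: "has_room k m (S - {x}) x \<longleftrightarrow> has_room k m S x"
proof -
  have "{y \<in> S - {x}. y < x} = {y \<in> S. y < x}" "{y \<in> S - {x}. x < y} = {y \<in> S. x < y}"
    by auto
  then show ?thesis
    unfolding has_room_def by simp
qed

lemma Cons_in_avoiders_T_set_iff:
  assumes "1 \<le> m" "m \<le> k"
  shows "(x, c) # rest \<in> avoiders S r (T_set k r m I) \<longleftrightarrow>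
    (x, c) \<in> admissible_heads k r m I S \<and> rest \<in> avoiders (S - {x}) r (T_set k r m I)"
proof (cases "(x, c) # rest \<in> coloured_arrangements S r")
  case True
  then have "x \<in> S" "c \<in> {1..r}" "rest \<in> coloured_arrangements (S - {x}) r"
    by (simp_all add: Cons_in_coloured_arrangements_iff)
  from True have "distinct (map fst ((x, c) # rest))" "\<forall>p \<in> set ((x, c) # rest). snd p \<in> {1..r}"
    and "fst ` set rest = S - {x}"
    unfolding coloured_arrangements_def by auto
  then have "(\<exists>phi \<in> T_set k r m I. contains ((x, c) # rest) phi) \<longleftrightarrow>
      (\<exists>phi \<in> T_set k r m I. contains rest phi) \<or> (c \<in> I \<and> has_room k m S x)"
    using contains_T_set_Cons_iff[OF _ _ assms] has_room_Diff_self by simp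
  with True \<open>x \<in> S\<close> \<open>c \<in> {1..r}\<close> \<open>rest \<in> coloured_arrangements (S - {x}) r\<close> show ?thesis
    unfolding avoiders_def admissible_heads_def by blast
next
  case False
  then have "(x, c) \<notin> admissible_heads k r m I S \<or> rest \<notin> avoiders (S - {x}) r (T_set k r m I)"
    by (auto simp: admissible_heads_def avoiders_def Cons_in_coloured_arrangements_iff)
  with False show ?thesis
    by (auto simp: avoiders_def)
qed

lemma card_avoiders_T_set_step:
  assumes "finite S" "S \<noteq> {}" "1 \<le> m" "m \<le> k"
  shows "card (avoiders S r (T_set k r m I)) =
    (\<Sum>p \<in> admissible_heads k r m I S. card (avoiders (S - {fst p}) r (T_set k r m I)))"
proof -
  let ?T = "T_set k r m I" and ?H = "admissible_heads k r m I S"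
  have "avoiders S r ?T = (\<lambda>(p, rest). p # rest) ` (SIGMA p : ?H. avoiders (S - {fst p}) r ?T)"
  proof (rule set_eqI)
    fix psi
    show "psi \<in> avoiders S r ?T \<longleftrightarrow> psi \<in> (\<lambda>(p, rest). p # rest) ` (SIGMA p : ?H. avoiders (S - {fst p}) r ?T)"
    proof (cases psi)
      case Nil
      with \<open>S \<noteq> {}\<close> show ?thesis
        by (auto simp: avoiders_def coloured_arrangements_def)
    next
      case (Cons p rest)
      then show ?thesis
        using Cons_in_avoiders_T_set_iff[OF assms(3,4), of "fst p" "snd p" rest] by force
    qed
  qed
  moreover have "inj_on (\<lambda>(p, rest). p # rest) (SIGMA p : ?H. avoiders (S - {fst p}) r ?T)"
    by (auto simp: inj_on_def)
  moreover have "finite ?H"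
    using assms(1) by (auto simp: admissible_heads_def intro: finite_subset[of _ "S \<times> {1..r}"])
  moreover have "finite (avoiders S' r ?T)" if "finite S'" for S'
    using finite_coloured_arrangements[OF that] by (simp add: avoiders_def)
  ultimately show ?thesis
    using assms(1) by (simp add: card_image)
qed

lemma card_has_room:
  assumes "finite S" "1 \<le> m" "m \<le> k"
  shows "card {x \<in> S. has_room k m S x} = card S - (k - 1)"
proof -
  let ?J = "{m - 1..<card S - (k - m)}"
  have above: "card {y \<in> S. x < y} = card S - 1 - rank S x" if "x \<in> S" for x
  proof -
    have "S - {x} = {y \<in> S. y < x} \<union> {y \<in> S. x < y}"
      by auto
    then have "card S - 1 = rank S x + card {y \<in> S. x < y}"
      using assms(1) card_Diff_singleton[OF that] unfolding rank_def
      by (simp add: card_Un_disjoint disjoint_iff)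
    then show ?thesis
      by simp
  qed
  have "rank S x < card S" if "x \<in> S" for x
    using rank_image[OF assms(1)] that by blast
  then have "{x \<in> S. has_room k m S x} = {x \<in> S. rank S x \<in> ?J}"
    using above unfolding has_room_def rank_def[symmetric] by fastforce
  then have "card {x \<in> S. has_room k m S x} = card (rank S ` {x \<in> S. rank S x \<in> ?J})"
    by (metis (no_types, lifting) card_image inj_on_rank[OF assms(1)] inj_on_subset mem_Collect_eq subsetI)
  also have "rank S ` {x \<in> S. rank S x \<in> ?J} = ?J"
  proof -
    have "?J \<subseteq> rank S ` S"
      using rank_image[OF assms(1)] by auto
    then show ?thesis
      by blast
  qed
  finally show ?thesis
    using assms(2,3) by simp
qed

lemma card_admissible_heads:
  assumes "finite S" "1 \<le> m" "m \<le> k" "I \<subseteq> {1..r}"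
  shows "card (admissible_heads k r m I S) = (r - card I) * card S + card I * min (card S) (k - 1)"
proof -
  let ?R = "{x \<in> S. has_room k m S x}"
  have "finite I"
    using assms(4) finite_subset by blast
  have heads: "admissible_heads k r m I S = S \<times> ({1..r} - I) \<union> (S - ?R) \<times> I"
    using assms(4) unfolding admissible_heads_def by auto
  have "card (admissible_heads k r m I S) = card (S \<times> ({1..r} - I)) + card ((S - ?R) \<times> I)"
    unfolding heads by (rule card_Un_disjoint) (use assms(1) \<open>finite I\<close> in auto)
  then have "card (admissible_heads k r m I S) = card S * card ({1..r} - I) + card (S - ?R) * card I"
    by (simp add: card_cartesian_product)
  moreover have "card ({1..r} - I) = r - card I"
    using assms(4) \<open>finite I\<close> by (simp add: card_Diff_subset)
  moreover have "card (S - ?R) = min (card S) (k - 1)"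
    using card_has_room[OF assms(1-3)] assms(1) by (simp add: card_Diff_subset)
  ultimately show ?thesis
    by (simp add: mult.commute)
qed

lemma card_avoiders_T_set:
  assumes "finite S" "1 \<le> m" "m \<le> k" "I \<subseteq> {1..r}"
  shows "card (avoiders S r (T_set k r m I)) = (\<Prod>L = 1..card S. (r - card I) * L + card I * min L (k - 1))"
  using assms(1)
proof (induction "card S" arbitrary: S)
  case 0
  then have "S = {}"
    by simp
  moreover have "\<forall>phi \<in> T_set k r m I. phi \<noteq> []"
    unfolding T_set_def coloured_perms_def by auto
  ultimately show ?case
    using avoiders_empty \<open>0 = card S\<close> by simp
next
  case (Suc n)
  let ?f = "\<lambda>L. (r - card I) * L + card I * min L (k - 1)"
  have "S \<noteq> {}"
    using Suc.hyps(2) by auto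
  have "card (avoiders S r (T_set k r m I)) = (\<Sum>p \<in> admissible_heads k r m I S. \<Prod>L = 1..n. ?f L)"
    unfolding card_avoiders_T_set_step[OF Suc.prems \<open>S \<noteq> {}\<close> assms(2,3)]
  proof (rule sum.cong)
    fix p assume "p \<in> admissible_heads k r m I S"
    then have "n = card (S - {fst p})"
      using Suc.hyps(2) Suc.prems by (auto simp: admissible_heads_def)
    then show "card (avoiders (S - {fst p}) r (T_set k r m I)) = (\<Prod>L = 1..n. ?f L)"
      using Suc.hyps(1) Suc.prems by simp
  qed simp
  also have "\<dots> = ?f (Suc n) * (\<Prod>L = 1..n. ?f L)"
    using card_admissible_heads[OF Suc.prems assms(2-4)] Suc.hyps(2) by simp
  also have "\<dots> = (\<Prod>L = 1..Suc n. ?f L)"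
    by simp
  finally show ?case
    using Suc.hyps(2) by simp
qed

lemma prod_min_split:
  fixes k r d n :: nat
  assumes "1 \<le> k" "k \<le> n" "d \<le> r"
  shows "(\<Prod>L = 1..n. (r - d) * L + d * min L (k - 1)) =
    fact (k - 1) * r ^ (k - 1) * (\<Prod>j = k..n. (r - d) * j + (k - 1) * d)"
proof -
  let ?f = "\<lambda>L. (r - d) * L + d * min L (k - 1)"
  have "{1..n} = {1..k - 1} \<union> {k..n}" "{1..k - 1} \<inter> {k..n} = {}"
    using assms(1,2) by auto
  then have "(\<Prod>L = 1..n. ?f L) = (\<Prod>L = 1..k - 1. ?f L) * (\<Prod>L = k..n. ?f L)"
    by (simp add: prod.union_disjoint)
  also have "(\<Prod>L = 1..k - 1. ?f L) = (\<Prod>L = 1..k - 1. r * L)"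
    using assms(3) by (intro prod.cong) (auto simp: min_def algebra_simps)
  also have "\<dots> = r ^ (k - 1) * fact (k - 1)"
    by (simp add: prod.distrib fact_prod)
  also have "(\<Prod>L = k..n. ?f L) = (\<Prod>j = k..n. (r - d) * j + (k - 1) * d)"
    by (intro prod.cong) auto
  finally show ?thesis
    by simp
qed

theorem theorem1:
  fixes k r m d n :: nat and I :: "nat set"
  assumes "k \<ge> 1" "r \<ge> 1" "1 \<le> m" "m \<le> k" "1 \<le> d" "d \<le> r"
    and "I \<subseteq> {1..r}" "card I = d" "n \<ge> k"
  shows "card (avoiding n r (T_set k r m I)) =
           fact (k - 1) * r ^ (k - 1) * (\<Prod>j = k..n. (r - d) * j + (k - 1) * d)"
proof -
  have "avoiding n r (T_set k r m I) = avoiders {1..n} r (T_set k r m I)"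
    unfolding avoiding_def avoiders_def coloured_perms_eq ..
  then show ?thesis
    using card_avoiders_T_set[OF _ assms(3,4,7)] prod_min_split[OF assms(1,9,6)] assms(8)
    by simp
qed

end
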